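(* Let $n=2m+4$. There exists a directed cycle $\mathcal{C}$ in the hypercube graph on $\{0,1\}^n$ with the following properties: (i) $\mathcal{C}$ is simple (does not intersect itself); (ii) $\mathcal{C}$ is divided into a cyclic sequence of $M$ contiguous chunks $K_1,\dots,K_M$ of three steps each, where $M$ is even, every odd-indexed chunk consists of three upward steps and every even-indexed chunk consists of three downward steps; (iii) $M\ge 2^m$; (iv) for every $i$, the second edge $e$ of $K_i$ is parallel to the first edge $e'$ of $K_{i+1}$ (indices taken cyclically, $K_{M+1}=K_1$), and moreover $e'\succ e$ if $i$ is odd and $e'\prec e$ if $i$ is even.
   Context: Identify $\{0,1\}^n$ with subsets of $[n]$; the hypercube graph has edges $(S,S+k)$ for $k\notin S$. A step of the cycle is upward if it adds an element and downward if it removes one. Two edges $(S,S+k)$ and $(T,T+l)$ are parallel if $k=l$; for parallel edges, $(S,S+k)\prec(T,T+k)$ means $S\subsetneq T$, and $e'\succ e$ means $e\prec e'$. *)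

theory Defs
  imports Main
begin

text \<open>Vertices of the hypercube on [n] = {0..<n} are subsets of {..<n}.
  An upward step from S to T adds one element k < n with k not in S.\<close>
definition up_step :: "nat \<Rightarrow> nat set \<Rightarrow> nat set \<Rightarrow> bool" where
  "up_step n S T \<longleftrightarrow> (\<exists>k. k < n \<and> k \<notin> S \<and> T = insert k S)"

text \<open>The (undirected) hypercube edge traversed by a step between S and T,
  represented as the pair (lower endpoint, upper endpoint), i.e. (S, S+k).\<close>
definition edge_of :: "nat set \<Rightarrow> nat set \<Rightarrow> nat set \<times> nat set" where
  "edge_of S T = (S \<inter> T, S \<union> T)"

definition parallel :: "nat set \<times> nat set \<Rightarrow> nat set \<times> nat set \<Rightarrow> bool" where
  "parallel e e' \<longleftrightarrow> snd e - fst e = snd e' - fst e'"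

definition edge_prec :: "nat set \<times> nat set \<Rightarrow> nat set \<times> nat set \<Rightarrow> bool" where
  "edge_prec e e' \<longleftrightarrow> parallel e e' \<and> fst e \<subset> fst e'"

end

theory Submission
  imports Defs
begin

text \<open>Take a cyclic sequence of \<open>N\<close> sets \<open>V\<^sub>i\<close> of equal size in \<open>{..<k}\<close> such that
  consecutive ones are joined through a common superset \<open>U\<^sub>i = V\<^sub>i + c = V\<^sub>i\<^sub>+\<^sub>1 + d\<close>,
  with all the \<open>V\<^sub>i\<close> and all the \<open>U\<^sub>i\<close> distinct. Using two fresh coordinates \<open>G = k\<close>
  and \<open>H = k + 1\<close>, the cycle
  \<open>V\<^sub>i, V\<^sub>i+G, V\<^sub>i+G+H, U\<^sub>i+G+H, U\<^sub>i+G, U\<^sub>i, V\<^sub>i\<^sub>+\<^sub>1, \<dots>\<close>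
  in the cube on \<open>k + 2\<close> coordinates alternates between three upward and three downward steps;
  the second edge of each upward chunk and the first edge of the next chunk both flip \<open>H\<close>
  (from \<open>V\<^sub>i+G\<close> and \<open>U\<^sub>i+G\<close>), and the second edge of each downward chunk and the first
  edge of the next chunk both flip \<open>G\<close> (from \<open>U\<^sub>i\<close> and \<open>V\<^sub>i\<^sub>+\<^sub>1\<close>), which gives the
  required orders since \<open>V\<^sub>i, V\<^sub>i\<^sub>+\<^sub>1 \<subset> U\<^sub>i\<close>. Such a sequence of length \<open>2\<^sup>p\<close> in
  \<open>{..<2p}\<close> comes from the reflected Gray code on \<open>p\<close> bits, encoding bit \<open>j\<close> by the choice
  between the elements \<open>2j\<close> and \<open>2j + 1\<close>.\<close>

definition gray_bit :: "nat \<Rightarrow> nat \<Rightarrow> bool" where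
  "gray_bit i k \<longleftrightarrow> bit i k \<noteq> bit i (Suc k)"

lemma gray_bit_0: "gray_bit i 0 \<longleftrightarrow> odd i \<noteq> odd (i div 2)"
  by (simp add: gray_bit_def bit_0 bit_Suc)

lemma gray_bit_Suc: "gray_bit i (Suc k) \<longleftrightarrow> gray_bit (i div 2) k"
  by (simp add: gray_bit_def bit_Suc)

lemma not_gray_bit_if_less_power: "i < 2 ^ p \<Longrightarrow> p \<le> k \<Longrightarrow> \<not> gray_bit i k"
  by (metis bit_take_bit_iff gray_bit_def le_SucI not_le take_bit_nat_eq_self_iff)

lemma gray_bit_mask:
  assumes "0 < p"
  shows "gray_bit (2 ^ p - 1) k \<longleftrightarrow> k = p - 1"
proof -
  have "(2::nat) ^ p - 1 = mask p" by (simp add: mask_eq_exp_minus_1)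
  then show ?thesis using assms unfolding gray_bit_def by (auto simp: bit_mask_iff)
qed

lemma gray_bit_inj: "(\<And>k. gray_bit i k = gray_bit j k) \<Longrightarrow> i = j"
proof (induction "i + j" arbitrary: i j rule: less_induct)
  case less
  show ?case
  proof (cases "i + j = 0")
    case False
    then have "i div 2 + j div 2 < i + j" by linarith
    moreover have "gray_bit (i div 2) k = gray_bit (j div 2) k" for k
      using less.prems[of "Suc k"] by (simp add: gray_bit_Suc)
    ultimately have "i div 2 = j div 2" using less.hyps by blast
    moreover have "odd i = odd j"
      using less.prems[of 0] calculation by (auto simp: gray_bit_0)
    ultimately show ?thesis
      by (metis div_mult_mod_eq odd_iff_mod_2_eq_one even_iff_mod_2_eq_zero)
  qed simp
qed

lemma gray_bit_Suc_flip: "\<exists>b. \<forall>k. gray_bit (Suc i) k \<noteq> gray_bit i k \<longleftrightarrow> k = b"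
proof (induction i rule: less_induct)
  case (less i)
  show ?case
  proof (cases "even i")
    case True
    then have "Suc i div 2 = i div 2" by presburger
    then have "gray_bit (Suc i) k \<noteq> gray_bit i k \<longleftrightarrow> k = 0" for k
      using True by (cases k) (auto simp: gray_bit_0 gray_bit_Suc)
    then show ?thesis by blast
  next
    case False
    then have half: "Suc i div 2 = Suc (i div 2)" "i div 2 < i" by presburger+
    then obtain b where b: "\<forall>k. gray_bit (Suc (i div 2)) k \<noteq> gray_bit (i div 2) k \<longleftrightarrow> k = b"
      using less by blast
    have "\<forall>k. gray_bit (Suc i) k \<noteq> gray_bit i k \<longleftrightarrow> k = Suc b"
    proof
      fix k show "gray_bit (Suc i) k \<noteq> gray_bit i k \<longleftrightarrow> k = Suc b"
        using b False half(1) by (cases k) (auto simp: gray_bit_0 gray_bit_Suc)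
    qed
    then show ?thesis by blast
  qed
qed

lemma gray_bit_inj_if_less_power:
  assumes "i < 2 ^ p" "j < 2 ^ p" "\<And>k. k < p \<Longrightarrow> gray_bit i k = gray_bit j k"
  shows "i = j"
  using assms not_gray_bit_if_less_power[of i p] not_gray_bit_if_less_power[of j p]
  by (metis gray_bit_inj not_le)

lemma gray_bit_cyclic_flip:
  assumes "0 < p" "i < 2 ^ p"
  shows "\<exists>b<p. \<forall>k. gray_bit (Suc i mod 2 ^ p) k \<noteq> gray_bit i k \<longleftrightarrow> k = b"
proof (cases "Suc i < 2 ^ p")
  case True
  obtain b where b: "\<forall>k. gray_bit (Suc i) k \<noteq> gray_bit i k \<longleftrightarrow> k = b"
    using gray_bit_Suc_flip by blast
  then have "b < p"
    using True assms(2) not_gray_bit_if_less_power[of i p] not_gray_bit_if_less_power[of "Suc i" p]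
    by (metis not_le)
  then show ?thesis using b True by auto
next
  case False
  then have "Suc i = 2 ^ p" using assms(2) by simp
  then have "i = 2 ^ p - 1" "Suc i mod 2 ^ p = 0" by simp_all
  then have "\<forall>k. gray_bit (Suc i mod 2 ^ p) k \<noteq> gray_bit i k \<longleftrightarrow> k = p - 1"
    using assms(1) gray_bit_mask by (simp add: gray_bit_def)
  then show ?thesis using assms(1) by (intro exI[of _ "p - 1"]) simp
qed

definition pair_choice :: "nat \<Rightarrow> (nat \<Rightarrow> bool) \<Rightarrow> nat set" where
  "pair_choice p f = (\<lambda>k. 2 * k + of_bool (f k)) ` {..<p}"

lemma mem_pair_choice: "x \<in> pair_choice p f \<longleftrightarrow> x < 2 * p \<and> (odd x \<longleftrightarrow> f (x div 2))"
proof
  assume "x < 2 * p \<and> (odd x \<longleftrightarrow> f (x div 2))"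
  then have "x = 2 * (x div 2) + of_bool (f (x div 2))" "x div 2 < p" by auto
  then show "x \<in> pair_choice p f" unfolding pair_choice_def by blast
qed (auto simp: pair_choice_def)

lemma pair_choice_subset: "pair_choice p f \<subseteq> {..<2 * p}"
  by (auto simp: mem_pair_choice)

lemma card_pair_choice: "card (pair_choice p f) = p"
proof -
  have "(2 * k + of_bool a) div 2 = k" for k :: nat and a by (cases a) simp_all
  then have "inj_on (\<lambda>k. 2 * k + of_bool (f k)) {..<p}"
    by (intro inj_onI) metis
  then show ?thesis by (simp add: pair_choice_def card_image)
qed

lemma double_add_of_bool_mem_pair_choice: "2 * k + of_bool a \<in> pair_choice p f \<longleftrightarrow> k < p \<and> f k = a"
  by (cases a) (auto simp: mem_pair_choice)

lemma pair_choice_inj: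
  assumes "pair_choice p f = pair_choice p g" "k < p"
  shows "f k = g k"
proof -
  have "2 * k + of_bool (f k) \<in> pair_choice p f" using assms(2) by (simp only: double_add_of_bool_mem_pair_choice)
  then show ?thesis using assms(1) double_add_of_bool_mem_pair_choice[of k "f k" p g] by simp
qed

lemma pair_choice_eq_insert:
  assumes "b < p" "\<And>k. k \<noteq> b \<Longrightarrow> h k = f k"
  shows "pair_choice p h = insert (2 * b + of_bool (h b)) ((\<lambda>k. 2 * k + of_bool (f k)) ` ({..<p} - {b}))"
proof -
  have "pair_choice p h = (\<lambda>k. 2 * k + of_bool (h k)) ` insert b ({..<p} - {b})"
    using assms(1) by (simp add: pair_choice_def insert_absorb)
  also have "\<dots> = insert (2 * b + of_bool (h b)) ((\<lambda>k. 2 * k + of_bool (h k)) ` ({..<p} - {b}))"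
    by (rule image_insert)
  also have "(\<lambda>k. 2 * k + of_bool (h k)) ` ({..<p} - {b}) = (\<lambda>k. 2 * k + of_bool (f k)) ` ({..<p} - {b})"
    using assms(2) by (intro image_cong) auto
  finally show ?thesis .
qed

lemma pair_choice_Un_flip:
  assumes "b < p" "\<forall>k. f k \<noteq> g k \<longleftrightarrow> k = b"
  shows "\<exists>c<2 * p. c \<notin> pair_choice p f \<and> pair_choice p f \<union> pair_choice p g = insert c (pair_choice p f)"
proof (intro exI conjI)
  let ?c = "2 * b + of_bool (g b)"
  show "?c < 2 * p" using assms(1) by simp
  show "?c \<notin> pair_choice p f"
    using assms(2) double_add_of_bool_mem_pair_choice[of b "g b" p f] by blast
  have "g k = f k" if "k \<noteq> b" for k using assms(2) that by blast
  then have "pair_choice p g = insert ?c ((\<lambda>k. 2 * k + of_bool (f k)) ` ({..<p} - {b}))"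
    using pair_choice_eq_insert[OF assms(1)] by blast
  moreover have "pair_choice p f = insert (2 * b + of_bool (f b)) ((\<lambda>k. 2 * k + of_bool (f k)) ` ({..<p} - {b}))"
    using pair_choice_eq_insert[OF assms(1)] by blast
  ultimately show "pair_choice p f \<union> pair_choice p g = insert ?c (pair_choice p f)"
    by blast
qed

lemma pair_choice_subset_Un_flip:
  assumes "\<forall>k. f k \<noteq> g k \<longleftrightarrow> k = b" "pair_choice p h \<subseteq> pair_choice p f \<union> pair_choice p g"
  shows "(\<forall>k<p. h k = f k) \<or> (\<forall>k<p. h k = g k)"
proof -
  have hk: "h k = f k \<or> h k = g k" if "k < p" for k
  proof -
    have "2 * k + of_bool (h k) \<in> pair_choice p f \<union> pair_choice p g"
      using assms(2) that double_add_of_bool_mem_pair_choice[of k "h k" p h] by blast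
    then show ?thesis using double_add_of_bool_mem_pair_choice[of k "h k" p f] double_add_of_bool_mem_pair_choice[of k "h k" p g] by blast
  qed
  have fg: "f k = g k" if "k \<noteq> b" for k using assms(1) that by blast
  show ?thesis
  proof (cases "h b = f b")
    case True
    then show ?thesis using hk fg by metis
  next
    case False
    then have "h b = g b" using assms(1) by auto
    then show ?thesis using hk fg by metis
  qed
qed

definition chunked_cycle :: "nat \<Rightarrow> nat set list \<Rightarrow> nat \<Rightarrow> bool" where
  "chunked_cycle n vs M \<longleftrightarrow>
    set vs \<subseteq> Pow {..<n} \<and> distinct vs \<and> length vs = 3 * M \<and> even M \<and>
    (\<forall>t < 3 * M.
       (if even (t div 3) then up_step n (vs ! t) (vs ! ((t + 1) mod (3 * M)))
        else up_step n (vs ! ((t + 1) mod (3 * M))) (vs ! t))) \<and>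
    (\<forall>j < M.
       (if even j
        then edge_prec (edge_of (vs ! (3 * j + 1)) (vs ! (3 * j + 2)))
                       (edge_of (vs ! ((3 * j + 3) mod (3 * M))) (vs ! ((3 * j + 4) mod (3 * M))))
        else edge_prec (edge_of (vs ! ((3 * j + 3) mod (3 * M))) (vs ! ((3 * j + 4) mod (3 * M))))
                       (edge_of (vs ! (3 * j + 1)) (vs ! (3 * j + 2)))))"

lemma up_step_insert: "x < n \<Longrightarrow> x \<notin> S \<Longrightarrow> up_step n S (insert x S)"
  unfolding up_step_def by blast

lemma edge_of_insert:
  assumes "x \<notin> S"
  shows "edge_of S (insert x S) = (S, insert x S)" "edge_of (insert x S) S = (S, insert x S)"
  using assms by (auto simp: edge_of_def)

lemma edge_prec_insert:
  "x \<notin> S \<Longrightarrow> x \<notin> T \<Longrightarrow> S \<subset> T \<Longrightarrow> edge_prec (S, insert x S) (T, insert x T)"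
  by (auto simp: edge_prec_def parallel_def)

locale flip_cycle =
  fixes N k :: nat and V U :: "nat \<Rightarrow> nat set"
  assumes V_subset: "\<And>i. i < N \<Longrightarrow> V i \<subseteq> {..<k}"
    \<comment> \<open>equal sizes keep every \<open>V i\<close> apart from every \<open>U j\<close>\<close>
    and card_V: "\<And>i j. i < N \<Longrightarrow> j < N \<Longrightarrow> card (V i) = card (V j)"
    and U_up: "\<And>i. i < N \<Longrightarrow> \<exists>c<k. c \<notin> V i \<and> U i = insert c (V i)"
    and U_down: "\<And>i. i < N \<Longrightarrow> \<exists>d. d \<notin> V (Suc i mod N) \<and> U i = insert d (V (Suc i mod N))"
    and inj_V: "inj_on V {..<N}"
    and inj_U: "inj_on U {..<N}"
begin

definition block :: "nat \<Rightarrow> nat set list" where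
  "block i = [V i, insert k (V i), insert (Suc k) (insert k (V i)),
              insert (Suc k) (insert k (U i)), insert k (U i), U i]"

definition vertex :: "nat \<Rightarrow> nat set" where
  "vertex t = block (t div 6) ! (t mod 6)"

lemma vertex_block: "r < 6 \<Longrightarrow> vertex (6 * i + r) = block i ! r"
  by (simp add: vertex_def)

lemma U_subset:
  assumes "i < N"
  shows "U i \<subseteq> {..<k}"
proof -
  obtain c where "c < k" "U i = insert c (V i)" using U_up[OF assms] by blast
  then show ?thesis using V_subset[OF assms] by simp
qed

lemma fresh_coordinates:
  assumes "i < N"
  shows "k \<notin> V i" "Suc k \<notin> V i" "k \<notin> U i" "Suc k \<notin> U i"
  using V_subset[OF assms] U_subset[OF assms] by auto

lemma V_neq_U: "i < N \<Longrightarrow> j < N \<Longrightarrow> V i \<noteq> U j"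
proof
  assume "i < N" "j < N" "V i = U j"
  moreover obtain c where "c \<notin> V j" "U j = insert c (V j)" using U_up \<open>j < N\<close> by blast
  moreover have "finite (V j)" using V_subset \<open>j < N\<close> finite_subset by blast
  ultimately show False using card_V[of i j] by simp
qed

lemma vertex_components:
  assumes "t < 6 * N"
  shows "vertex t \<inter> {..<k} = (if t mod 6 < 3 then V (t div 6) else U (t div 6))"
    and "k \<in> vertex t \<longleftrightarrow> t mod 6 \<in> {1, 2, 3, 4}"
    and "Suc k \<in> vertex t \<longleftrightarrow> t mod 6 \<in> {2, 3}"
proof -
  have "t div 6 < N" using assms by simp
  then have "V (t div 6) \<subseteq> {..<k}" "U (t div 6) \<subseteq> {..<k}" using V_subset U_subset by blast+
  moreover have "t mod 6 \<in> {0, 1, 2, 3, 4, 5}" by auto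
  ultimately show "vertex t \<inter> {..<k} = (if t mod 6 < 3 then V (t div 6) else U (t div 6))"
    and "k \<in> vertex t \<longleftrightarrow> t mod 6 \<in> {1, 2, 3, 4}"
    and "Suc k \<in> vertex t \<longleftrightarrow> t mod 6 \<in> {2, 3}"
    unfolding vertex_def block_def by auto
qed

lemma inj_vertex: "inj_on vertex {..<6 * N}"
proof
  fix s t assume "s \<in> {..<6 * N}" "t \<in> {..<6 * N}" and eq: "vertex s = vertex t"
  then have s: "s < 6 * N" and t: "t < 6 * N" by auto
  then have i: "s div 6 < N" "t div 6 < N" by auto
  have low: "(if s mod 6 < 3 then V (s div 6) else U (s div 6)) = (if t mod 6 < 3 then V (t div 6) else U (t div 6))"
    using vertex_components(1)[OF s] vertex_components(1)[OF t] eq by simp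
  then have half: "s mod 6 < 3 \<longleftrightarrow> t mod 6 < 3"
    using V_neq_U i by metis
  have "s div 6 = t div 6"
    using low half i inj_V inj_U by (auto split: if_splits dest: inj_onD)
  moreover have "s mod 6 = t mod 6"
  proof -
    have "s mod 6 \<in> {0, 1, 2, 3, 4, 5}" "t mod 6 \<in> {0, 1, 2, 3, 4, 5}" by auto
    moreover have "s mod 6 \<in> {1, 2, 3, 4} \<longleftrightarrow> t mod 6 \<in> {1, 2, 3, 4}"
      "s mod 6 \<in> {2, 3} \<longleftrightarrow> t mod 6 \<in> {2, 3}"
      using vertex_components(2,3)[OF s] vertex_components(2,3)[OF t] eq by simp_all
    ultimately show ?thesis using half by (elim insertE; simp)
  qed
  ultimately show "s = t" by (metis div_mult_mod_eq)
qed

lemma vertex_next: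
  assumes "t < 6 * N"
  shows "vertex ((t + 1) mod (6 * N)) =
    (if t mod 6 = 5 then V (Suc (t div 6) mod N) else block (t div 6) ! Suc (t mod 6))"
proof (cases "t mod 6 = 5")
  case True
  then have "t + 1 = 6 * Suc (t div 6)" by presburger
  then have "(t + 1) mod (6 * N) = 6 * (Suc (t div 6) mod N) + 0" by (metis mod_mult_mult1 add_0_right)
  then show ?thesis using True vertex_block[of 0] by (simp add: block_def)
next
  case False
  then have "t + 1 = 6 * (t div 6) + Suc (t mod 6)" "Suc (t mod 6) < 6" by presburger+
  moreover have "t + 1 < 6 * N"
    using assms False by presburger
  ultimately show ?thesis using False vertex_block by (metis mod_less)
qed

lemma vertex_step:
  assumes "t < 6 * N"
  shows "if even (t div 3) then up_step (k + 2) (vertex t) (vertex ((t + 1) mod (6 * N)))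
         else up_step (k + 2) (vertex ((t + 1) mod (6 * N))) (vertex t)"
proof -
  define i r where "i = t div 6" and "r = t mod 6"
  have i: "i < N" using assms by (simp add: i_def)
  obtain c d where c: "c < k" "c \<notin> V i" "U i = insert c (V i)"
    and d: "d \<notin> V (Suc i mod N)" "U i = insert d (V (Suc i mod N))"
    using U_up[OF i] U_down[OF i] by blast
  have "d < k" using d(2) U_subset[OF i] by blast
  note fresh = fresh_coordinates[OF i]
  have r: "r \<in> {0, 1, 2, 3, 4, 5}" and parity: "t div 3 = 2 * i + r div 3"
    unfolding i_def r_def by auto presburger
  have up2: "up_step (k + 2) (insert (Suc k) (insert k (V i))) (insert (Suc k) (insert k (U i)))"
    using c fresh by (intro up_step_def[THEN iffD2] exI[of _ c]) auto
  have up5: "up_step (k + 2) (V (Suc i mod N)) (U i)"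
    using d \<open>d < k\<close> by (metis up_step_insert trans_less_add1)
  have "vertex t = block i ! r" by (simp add: vertex_def i_def r_def)
  with vertex_next[OF assms, folded i_def r_def] r parity up2 up5 fresh show ?thesis
    by (auto simp: block_def intro!: up_step_insert)
qed

lemma vertex_edge:
  assumes "j < 2 * N"
  shows "if even j
    then edge_prec (edge_of (vertex (3 * j + 1)) (vertex (3 * j + 2)))
                   (edge_of (vertex ((3 * j + 3) mod (6 * N))) (vertex ((3 * j + 4) mod (6 * N))))
    else edge_prec (edge_of (vertex ((3 * j + 3) mod (6 * N))) (vertex ((3 * j + 4) mod (6 * N))))
                   (edge_of (vertex (3 * j + 1)) (vertex (3 * j + 2)))"
proof -
  define i where "i = j div 2"
  have i: "i < N" using assms by (simp add: i_def)
  obtain c d where c: "c < k" "c \<notin> V i" "U i = insert c (V i)"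
    and d: "d \<notin> V (Suc i mod N)" "U i = insert d (V (Suc i mod N))"
    using U_up[OF i] U_down[OF i] by blast
  note fresh = fresh_coordinates[OF i]
  have wrap: "(6 * a + r) mod (6 * N) = 6 * (a mod N) + r" if "r < 6" for a r
    using that by (simp add: mod_mult2_eq)
  show ?thesis
  proof (cases "even j")
    case True
    then have idx: "3 * j + 1 = 6 * i + 1" "3 * j + 2 = 6 * i + 2"
      "(3 * j + 3) mod (6 * N) = 6 * i + 3" "(3 * j + 4) mod (6 * N) = 6 * i + 4"
      using wrap[of _ i] i by (auto simp: i_def)
    have "insert k (V i) \<subset> insert k (U i)" using c fresh by auto
    then have "edge_prec (edge_of (insert k (V i)) (insert (Suc k) (insert k (V i))))
        (edge_of (insert (Suc k) (insert k (U i))) (insert k (U i)))"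
      using fresh by (simp add: edge_of_insert edge_prec_insert)
    then show ?thesis
      unfolding idx using True vertex_block[of 1 i] vertex_block[of 2 i] vertex_block[of 3 i] vertex_block[of 4 i]
      by (simp add: block_def)
  next
    case False
    then have j: "j = 2 * i + 1" by (simp add: i_def)
    then have j3: "3 * j + 3 = 6 * Suc i + 0" "3 * j + 4 = 6 * Suc i + 1" by simp_all
    have idx: "3 * j + 1 = 6 * i + 4" "3 * j + 2 = 6 * i + 5"
      "(3 * j + 3) mod (6 * N) = 6 * (Suc i mod N) + 0" "(3 * j + 4) mod (6 * N) = 6 * (Suc i mod N) + 1"
      using j unfolding j3 by (simp_all only: wrap) simp_all
    have "V (Suc i mod N) \<subset> U i" using d by auto
    moreover have "k \<notin> V (Suc i mod N)" using fresh_coordinates[of "Suc i mod N"] i by simp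
    ultimately have "edge_prec (edge_of (V (Suc i mod N)) (insert k (V (Suc i mod N))))
        (edge_of (insert k (U i)) (U i))"
      using fresh by (simp add: edge_of_insert edge_prec_insert)
    then show ?thesis
      unfolding idx using False vertex_block[of 4 i] vertex_block[of 5 i]
        vertex_block[of 0 "Suc i mod N"] vertex_block[of 1 "Suc i mod N"]
      by (simp add: block_def)
  qed
qed

lemma vertex_subset: "t < 6 * N \<Longrightarrow> vertex t \<subseteq> {..<k + 2}"
proof -
  assume "t < 6 * N"
  then have "V (t div 6) \<subseteq> {..<k}" "U (t div 6) \<subseteq> {..<k}" using V_subset U_subset by auto
  then have "set (block (t div 6)) \<subseteq> Pow {..<k + 2}" by (auto simp: block_def)
  moreover have "vertex t \<in> set (block (t div 6))"
    unfolding vertex_def by (rule nth_mem) (simp add: block_def)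
  ultimately show ?thesis by blast
qed

theorem vertex_chunked_cycle: "chunked_cycle (k + 2) (map vertex [0..<6 * N]) (2 * N)"
proof -
  let ?vs = "map vertex [0..<6 * N]"
  have nth: "?vs ! t = vertex t" if "t < 6 * N" for t
    using that by simp
  have nth_mod: "?vs ! (t mod (6 * N)) = vertex (t mod (6 * N))" if "0 < N" for t
    using that by (simp add: nth)
  have "\<forall>t < 6 * N. if even (t div 3) then up_step (k + 2) (?vs ! t) (?vs ! ((t + 1) mod (6 * N)))
      else up_step (k + 2) (?vs ! ((t + 1) mod (6 * N))) (?vs ! t)"
  proof (intro allI impI)
    fix t assume t: "t < 6 * N"
    then have "0 < N" by simp
    with t show "if even (t div 3) then up_step (k + 2) (?vs ! t) (?vs ! ((t + 1) mod (6 * N)))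
      else up_step (k + 2) (?vs ! ((t + 1) mod (6 * N))) (?vs ! t)"
      using vertex_step[OF t] by (simp only: nth nth_mod)
  qed
  moreover have "\<forall>j < 2 * N. if even j
      then edge_prec (edge_of (?vs ! (3 * j + 1)) (?vs ! (3 * j + 2)))
                     (edge_of (?vs ! ((3 * j + 3) mod (6 * N))) (?vs ! ((3 * j + 4) mod (6 * N))))
      else edge_prec (edge_of (?vs ! ((3 * j + 3) mod (6 * N))) (?vs ! ((3 * j + 4) mod (6 * N))))
                     (edge_of (?vs ! (3 * j + 1)) (?vs ! (3 * j + 2)))"
  proof (intro allI impI)
    fix j assume j: "j < 2 * N"
    then have "3 * j + 1 < 6 * N" "3 * j + 2 < 6 * N" "0 < N" by linarith+
    then show "if even j
      then edge_prec (edge_of (?vs ! (3 * j + 1)) (?vs ! (3 * j + 2)))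
                     (edge_of (?vs ! ((3 * j + 3) mod (6 * N))) (?vs ! ((3 * j + 4) mod (6 * N))))
      else edge_prec (edge_of (?vs ! ((3 * j + 3) mod (6 * N))) (?vs ! ((3 * j + 4) mod (6 * N))))
                     (edge_of (?vs ! (3 * j + 1)) (?vs ! (3 * j + 2)))"
      using vertex_edge[OF j] by (simp only: nth nth_mod)
  qed
  moreover have "set ?vs \<subseteq> Pow {..<k + 2}"
    using vertex_subset by (simp add: image_subset_iff)
  moreover have "distinct ?vs"
    using inj_vertex by (simp add: distinct_map atLeast0LessThan)
  moreover have "length ?vs = 6 * N" "even (2 * N)" by simp_all
  moreover have len: "3 * (2 * N) = 6 * N" by simp
  ultimately show ?thesis
    unfolding chunked_cycle_def len by blast
qed
end

lemma Suc_mod_inj: "i < q \<Longrightarrow> j < q \<Longrightarrow> Suc i mod q = Suc j mod q \<Longrightarrow> i = j"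
  by (simp add: mod_Suc split: if_splits)

lemma Suc_Suc_mod_neq: "3 \<le> q \<Longrightarrow> i < q \<Longrightarrow> Suc (Suc i mod q) mod q \<noteq> i"
  by (simp add: mod_Suc split: if_splits)

lemma gray_pair_choice_inj:
  "i < 2 ^ p \<Longrightarrow> j < 2 ^ p \<Longrightarrow> pair_choice p (gray_bit i) = pair_choice p (gray_bit j) \<Longrightarrow> i = j"
  by (rule gray_bit_inj_if_less_power) (auto dest: pair_choice_inj)

lemma gray_pair_choice_subset_Un:
  assumes "0 < p" "i < 2 ^ p" "j < 2 ^ p"
    and "pair_choice p (gray_bit j) \<subseteq> pair_choice p (gray_bit i) \<union> pair_choice p (gray_bit (Suc i mod 2 ^ p))"
  shows "j = i \<or> j = Suc i mod 2 ^ p"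
proof -
  obtain b where "\<forall>k. gray_bit (Suc i mod 2 ^ p) k \<noteq> gray_bit i k \<longleftrightarrow> k = b"
    using gray_bit_cyclic_flip[OF assms(1,2)] by blast
  then have "\<forall>k. gray_bit i k \<noteq> gray_bit (Suc i mod 2 ^ p) k \<longleftrightarrow> k = b" by auto
  then consider "\<forall>k<p. gray_bit j k = gray_bit i k" | "\<forall>k<p. gray_bit j k = gray_bit (Suc i mod 2 ^ p) k"
    using pair_choice_subset_Un_flip[OF _ assms(4)] by blast
  then show ?thesis
  proof cases
    case 1
    then show ?thesis using gray_bit_inj_if_less_power[OF assms(3,2)] by blast
  next
    case 2
    have "Suc i mod 2 ^ p < 2 ^ p" by simp
    then show ?thesis using 2 gray_bit_inj_if_less_power[OF assms(3)] by blast
  qed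
qed

lemma gray_flip_cycle:
  assumes "2 \<le> p"
  shows "flip_cycle (2 ^ p) (2 * p) (\<lambda>i. pair_choice p (gray_bit i))
    (\<lambda>i. pair_choice p (gray_bit i) \<union> pair_choice p (gray_bit (Suc i mod 2 ^ p)))"
proof
  let ?V = "\<lambda>i. pair_choice p (gray_bit i)" and ?n = "\<lambda>i. Suc i mod 2 ^ p"
  have p: "0 < p" using assms by simp
  show "?V i \<subseteq> {..<2 * p}" for i by (rule pair_choice_subset)
  show "card (?V i) = card (?V j)" for i j by (simp add: card_pair_choice)
  show "inj_on ?V {..<2 ^ p}"
    by (intro inj_onI) (simp add: gray_pair_choice_inj)
  show "inj_on (\<lambda>i. ?V i \<union> ?V (?n i)) {..<2 ^ p}"
  proof (intro inj_onI)
    fix i j assume "i \<in> {..<2 ^ p}" "j \<in> {..<2 ^ p}" and eq: "?V i \<union> ?V (?n i) = ?V j \<union> ?V (?n j)"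
    then have i: "i < 2 ^ p" and j: "j < 2 ^ p" and nj: "?n j < 2 ^ p" by auto
    have "j = i \<or> j = ?n i" "?n j = i \<or> ?n j = ?n i"
      using gray_pair_choice_subset_Un[OF p i] j nj eq by blast+
    moreover have "(2::nat) ^ 2 \<le> 2 ^ p" using assms by (rule power_increasing) simp
    ultimately show "i = j"
      using Suc_mod_inj[OF j i] Suc_Suc_mod_neq[of "2 ^ p" i] i by fastforce
  qed
  fix i :: nat assume i: "i < 2 ^ p"
  obtain b where b: "b < p" "\<forall>k. gray_bit (?n i) k \<noteq> gray_bit i k \<longleftrightarrow> k = b"
    using gray_bit_cyclic_flip[OF p i] by blast
  then have "\<forall>k. gray_bit i k \<noteq> gray_bit (?n i) k \<longleftrightarrow> k = b" by auto
  show "\<exists>c<2 * p. c \<notin> ?V i \<and> ?V i \<union> ?V (?n i) = insert c (?V i)"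
    by (rule pair_choice_Un_flip) fact+
  show "\<exists>d. d \<notin> ?V (?n i) \<and> ?V i \<union> ?V (?n i) = insert d (?V (?n i))"
    using pair_choice_Un_flip[OF b] by (auto simp: Un_commute)
qed

text \<open>For \<open>p = 1\<close> the two Gray codes give \<open>U 0 = U 1\<close>, so the cube of dimension 4 needs
  its own one-block cycle \<open>{}, {2}, {2,3}, {0,2,3}, {0,2}, {0}\<close>.\<close>

lemma small_chunked_cycle: "\<exists>vs. chunked_cycle 4 vs 2"
proof -
  have "flip_cycle 1 2 (\<lambda>_. {}) (\<lambda>_. {0})" by unfold_locales (auto simp: inj_on_def)
  from flip_cycle.vertex_chunked_cycle[OF this] show ?thesis by auto
qed

lemma gray_chunked_cycle: "2 \<le> p \<Longrightarrow> \<exists>vs. chunked_cycle (2 * p + 2) vs (2 * 2 ^ p)"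
  using flip_cycle.vertex_chunked_cycle[OF gray_flip_cycle] by blast

theorem lemma10:
  fixes m n :: nat
  assumes "n = 2 * m + 4"
  shows "\<exists>(vs :: nat set list) (M :: nat).
    set vs \<subseteq> Pow {..<n} \<and> distinct vs \<and> length vs = 3 * M \<and>
    even M \<and> M \<ge> 2 ^ m \<and>
    (\<forall>t < 3 * M.
       (if even (t div 3) then up_step n (vs ! t) (vs ! ((t + 1) mod (3 * M)))
        else up_step n (vs ! ((t + 1) mod (3 * M))) (vs ! t))) \<and>
    (\<forall>j < M.
       (if even j
        then edge_prec (edge_of (vs ! (3 * j + 1)) (vs ! (3 * j + 2)))
                       (edge_of (vs ! ((3 * j + 3) mod (3 * M))) (vs ! ((3 * j + 4) mod (3 * M))))
        else edge_prec (edge_of (vs ! ((3 * j + 3) mod (3 * M))) (vs ! ((3 * j + 4) mod (3 * M))))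
                       (edge_of (vs ! (3 * j + 1)) (vs ! (3 * j + 2)))))"
proof -
  obtain vs M where "chunked_cycle n vs M" "2 ^ m \<le> M"
  proof (cases "m = 0")
    case True
    obtain vs where "chunked_cycle 4 vs 2" using small_chunked_cycle by blast
    moreover have "n = 4" using assms True by simp
    ultimately show ?thesis using True by (intro that) auto
  next
    case False
    then obtain vs where "chunked_cycle (2 * (m + 1) + 2) vs (2 * 2 ^ (m + 1))"
      using gray_chunked_cycle[of "m + 1"] by auto
    moreover have "2 * (m + 1) + 2 = n" using assms by simp
    ultimately show ?thesis by (intro that) auto
  qed
  then show ?thesis unfolding chunked_cycle_def by blast
qed

end
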